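(* Let $T$, $\mathcal{S}=\mathcal{S}_+\cup\mathcal{S}_-$, $\Psi$, $U$, $\mu$, $P_\mu$ and $V_\mu$ be as in the context. Consider the discrete-time QBD with phase space $\mathcal{S}$ and transition blocks $$B_{-1}=\begin{bmatrix}0&(I-\mu^{-1}T_{++})^{-1}P_{\mu+-}\\0&V_\mu\end{bmatrix},\quad B_0=0,\quad B_1=\begin{bmatrix}(I-\mu^{-1}T_{++})^{-1}&0\\0&0\end{bmatrix}.$$ Then its $\mathcal{G}$-matrix is $$\mathcal{G}_B=\begin{bmatrix}0&\Psi\\0&V_\mu\end{bmatrix}.$$
   Context: $T$ is the generator of a continuous-time Markov chain on a finite set $\mathcal{S}=\mathcal{S}_+\cup\mathcal{S}_-$ (disjoint, both nonempty), partitioned into blocks $T_{++},T_{+-},T_{-+},T_{--}$ according to $\mathcal{S}_\pm$. $\Psi$ is the minimal nonnegative solution of $T_{+-}+\Psi T_{--}+T_{++}\Psi+\Psi T_{-+}\Psi=0$ (the first-return probability matrix of the unit-rate fluid queue with phase generator $T$, rates $+1$ on $\mathcal{S}_+$ and $-1$ on $\mathcal{S}_-$), and $U:=T_{--}+T_{-+}\Psi$. $\mu>0$ satisfies $\mu\ge\max_i|T_{ii}|$; $P_\mu:=I+\mu^{-1}T$ with blocks $P_{\mu++}$ etc., and $V_\mu:=I+\mu^{-1}U$. A discrete-time quasi-birth-death process (QBD) with transition blocks $L_{-1},L_0,L_1$ is a Markov chain $\{(Y_n,\kappa_n)\}$ on $\mathbb{Z}\times\mathcal{S}$ with $\mathbb{P}[Y_n=k+d,\kappa_n=j\mid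 Y_{n-1}=k,\kappa_{n-1}=i]=(L_d)_{ij}$ for $d\in\{-1,0,1\}$. Its $\mathcal{G}$-matrix has entries $\mathcal{G}_{ij}=\mathbb{P}[\theta<\infty,\kappa_\theta=j\mid Y_0=k,\kappa_0=i]$ with $\theta=\inf\{n>0:Y_n=k-1\}$. Matrices are partitioned into blocks according to $\mathcal{S}_+,\mathcal{S}_-$. *)

theory Defs
  imports "HOL-Analysis.Analysis"
begin

text \<open>Phase space S = S+ \<union> S- is modelled as the sum type 'p + 'm
  (Inl = S+, Inr = S-); both parts are finite and nonempty. Matrices are
  real^'b^'a (rows indexed by 'a, columns by 'b).\<close>

definition is_generator :: "real^'s^'s \<Rightarrow> bool" where
  "is_generator T \<longleftrightarrow> (\<forall>i j. i \<noteq> j \<longrightarrow> 0 \<le> T$i$j) \<and> (\<forall>i. (\<Sum>j\<in>UNIV. T$i$j) = 0)"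

definition blk_pp :: "real^('p::finite+'m::finite)^('p::finite+'m::finite) \<Rightarrow> real^'p^'p" where
  "blk_pp A = (\<chi> i j. A$(Inl i)$(Inl j))"
definition blk_pm :: "real^('p::finite+'m::finite)^('p::finite+'m::finite) \<Rightarrow> real^'m^'p" where
  "blk_pm A = (\<chi> i j. A$(Inl i)$(Inr j))"
definition blk_mp :: "real^('p::finite+'m::finite)^('p::finite+'m::finite) \<Rightarrow> real^'p^'m" where
  "blk_mp A = (\<chi> i j. A$(Inr i)$(Inl j))"
definition blk_mm :: "real^('p::finite+'m::finite)^('p::finite+'m::finite) \<Rightarrow> real^'m^'m" where
  "blk_mm A = (\<chi> i j. A$(Inr i)$(Inr j))"

definition blocks :: "real^'p^'p \<Rightarrow> real^'m^'p \<Rightarrow> real^'p^'m \<Rightarrow> real^'m^'m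
    \<Rightarrow> real^('p::finite+'m::finite)^('p::finite+'m::finite)" where
  "blocks A B C D = (\<chi> i j. case i of
       Inl a \<Rightarrow> (case j of Inl b \<Rightarrow> A$a$b | Inr b \<Rightarrow> B$a$b)
     | Inr a \<Rightarrow> (case j of Inl b \<Rightarrow> C$a$b | Inr b \<Rightarrow> D$a$b))"

definition nonneg_mat :: "real^'b^'a \<Rightarrow> bool" where
  "nonneg_mat X \<longleftrightarrow> (\<forall>i j. 0 \<le> X$i$j)"

definition riccati_sol :: "real^('p::finite+'m::finite)^('p::finite+'m::finite) \<Rightarrow> real^'m^'p \<Rightarrow> bool" where
  "riccati_sol T X \<longleftrightarrow>
     blk_pm T + X ** blk_mm T + blk_pp T ** X + X ** blk_mp T ** X = 0"

definition is_Psi :: "real^('p::finite+'m::finite)^('p::finite+'m::finite) \<Rightarrow> real^'m^'p \<Rightarrow> bool" where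
  "is_Psi T Psi \<longleftrightarrow> nonneg_mat Psi \<and> riccati_sol T Psi \<and>
     (\<forall>X. nonneg_mat X \<and> riccati_sol T X \<longrightarrow> (\<forall>i j. Psi$i$j \<le> X$i$j))"

text \<open>Taboo probabilities of a level-homogeneous QBD with blocks Lm1, L0, L1,
  started in level 0, phase i: entry (i,j) of qbd_taboo Lm1 L0 L1 n k is the
  probability that after n steps the chain is in level k (k \<ge> 0), phase j,
  without having visited level -1 at steps 1..n.\<close>
fun qbd_taboo :: "real^'s^'s \<Rightarrow> real^'s^'s \<Rightarrow> real^'s^'s \<Rightarrow> nat \<Rightarrow> nat \<Rightarrow> real^'s^'s" where
  "qbd_taboo Lm1 L0 L1 0 k = (if k = 0 then mat 1 else 0)"
| "qbd_taboo Lm1 L0 L1 (Suc n) k =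
     qbd_taboo Lm1 L0 L1 n k ** L0
     + (if k > 0 then qbd_taboo Lm1 L0 L1 n (k - 1) ** L1 else 0)
     + qbd_taboo Lm1 L0 L1 n (k + 1) ** Lm1"

text \<open>G-matrix: G_ij = P[theta < \<infinity>, kappa_theta = j | Y_0 = k, kappa_0 = i],
  written as the sum over n of P[theta = n+1, kappa_(n+1) = j].\<close>
definition qbd_G :: "real^'s^'s \<Rightarrow> real^'s^'s \<Rightarrow> real^'s^'s \<Rightarrow> real^'s^'s" where
  "qbd_G Lm1 L0 L1 = (\<chi> i j. \<Sum>n. (qbd_taboo Lm1 L0 L1 n 0 ** Lm1)$i$j)"

end

theory Submission
  imports Defs
begin

(* The QBD B never leaves S- for S+, climbs only inside S+ (one level per step, with matrix W)
   and descends from S+ to S- with Q = W P+- and inside S- with V.  A first passage from level 0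
   to level -1 therefore climbs k levels in S+ and descends k + 1 levels, which gives
   G+- = sum_k W^k Q V^k and G-- = V.

   Multiplying the Riccati equation by W (the inverse of the M-matrix I - T++/mu, nonnegative by a
   minimum principle) turns it into the fixed point equation Y = Q + W Y V(Y) with
   V(Y) = I + (T-- + T-+ Y)/mu, monotone on nonnegative matrices, and Psi is its minimal
   nonnegative solution.  As Psi = Q + W Psi V(Psi), the partial sums of sum_k W^k Q V(Psi)^k are
   bounded by Psi; their limit X satisfies X = Q + W X V(Psi) >= Q + W X V(X), so a
   Knaster-Tarski argument yields a solution below X, and minimality of Psi forces X = Psi. *)

section \<open>Entrywise nonnegative real matrices\<close>

lemma matrix_add_rdistrib: "((A::'a::semiring_1^'n^'m) + B) ** C = A ** C + B ** C"
  by (simp add: matrix_matrix_mult_def vec_eq_iff sum.distrib distrib_right)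

lemma matrix_diff_rdistrib: "((A::'a::ring_1^'n^'m) - B) ** C = A ** C - B ** C"
  by (simp add: matrix_matrix_mult_def vec_eq_iff sum_subtractf left_diff_distrib)

lemma matrix_mult_sum_distrib:
  "(A::'a::semiring_1^'n^'m) ** (\<Sum>k\<in>K. f k) ** B = (\<Sum>k\<in>K. A ** f k ** B)"
  by (induction K rule: infinite_finite_induct) (simp_all add: matrix_add_ldistrib matrix_add_rdistrib)

lemma matrix_mult_nonneg:
  fixes A :: "real^'n^'m"
  shows "0 \<le> A \<Longrightarrow> 0 \<le> B \<Longrightarrow> 0 \<le> A ** B"
  by (auto simp: less_eq_vec_def matrix_matrix_mult_def intro!: sum_nonneg)

lemma matrix_mult_mono:
  fixes A :: "real^'n^'m"
  assumes "0 \<le> A" "0 \<le> B" "A \<le> A'" "B \<le> B'"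
  shows "A ** B \<le> A' ** B'"
proof -
  have "A$i$k * B$k$j \<le> A'$i$k * B'$k$j" for i j k
    using assms by (auto simp: less_eq_vec_def intro!: mult_mono) (meson order_trans)
  then show ?thesis
    by (auto simp: less_eq_vec_def matrix_matrix_mult_def intro!: sum_mono)
qed

lemma tendsto_matrix_mult [tendsto_intros]:
  fixes f :: "'a \<Rightarrow> real^'n^'m"
  assumes "(f \<longlongrightarrow> A) F" "(g \<longlongrightarrow> B) F"
  shows "((\<lambda>x. f x ** g x) \<longlongrightarrow> A ** B) F"
  unfolding matrix_matrix_mult_def by (intro tendsto_intros assms)

fun matpow :: "'a::semiring_1^'n^'n \<Rightarrow> nat \<Rightarrow> 'a^'n^'n" where
  "matpow A 0 = mat 1"
| "matpow A (Suc n) = matpow A n ** A"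

lemma matpow_commute: "A ** matpow A n = matpow A n ** A"
  by (induction n) (simp_all add: matrix_mul_assoc)

lemma matpow_nonneg: "0 \<le> A \<Longrightarrow> 0 \<le> matpow (A::real^'n^'n) n"
  by (induction n) (simp_all add: matrix_mult_nonneg, simp add: less_eq_vec_def mat_def)

lemma nonneg_matrix_series_summable:
  fixes t :: "nat \<Rightarrow> real^'n^'m"
  assumes nonneg: "\<And>k. 0 \<le> t k" and bounded: "\<And>n. (\<Sum>k<n. t k) \<le> B"
  shows "summable t" and "0 \<le> suminf t" and "suminf t \<le> B"
proof -
  have entry_bounded: "(\<Sum>k<n. t k $ i $ j) \<le> B $ i $ j" for n i j
    using bounded[of n] by (simp add: less_eq_vec_def)
  have entry_nonneg: "0 \<le> t k $ i $ j" for k i j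
    using nonneg[of k] by (simp add: less_eq_vec_def)
  have summable_entry: "summable (\<lambda>k. t k $ i $ j)" for i j
    using entry_nonneg entry_bounded by (rule summableI_nonneg_bounded)
  have sums: "t sums (\<chi> i j. \<Sum>k. t k $ i $ j)"
    unfolding sums_def
    by (intro vec_tendstoI) (simp add: summable_LIMSEQ summable_entry)
  then show "summable t" by (rule sums_summable)
  have suminf: "suminf t = (\<chi> i j. \<Sum>k. t k $ i $ j)"
    using sums by (rule sums_unique[symmetric])
  then show "0 \<le> suminf t"
    using entry_nonneg by (simp add: less_eq_vec_def suminf_nonneg summable_entry)
  from suminf show "suminf t \<le> B"
    using entry_bounded by (simp add: less_eq_vec_def suminf_le_const summable_entry)
qed

lemma invertible_matrix_inv:
  assumes "invertible A"
  shows "A ** matrix_inv A = mat 1" and "matrix_inv A ** A = mat 1"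
proof -
  obtain B where "A ** B = mat 1" "B ** A = mat 1" using assms unfolding invertible_def by blast
  then have "A ** matrix_inv A = mat 1 \<and> matrix_inv A ** A = mat 1"
    unfolding matrix_inv_def by (rule someI[of _ B, OF conjI])
  then show "A ** matrix_inv A = mat 1" and "matrix_inv A ** A = mat 1" by auto
qed

lemma fixpoint_below_superfixpoint:
  fixes F :: "'a::conditionally_complete_lattice \<Rightarrow> 'a"
  assumes mono: "\<And>Y Z. a \<le> Y \<Longrightarrow> Y \<le> Z \<Longrightarrow> F Y \<le> F Z"
    and lower: "\<And>Y. a \<le> Y \<Longrightarrow> a \<le> F Y"
    and X: "a \<le> X" "F X \<le> X"
  obtains Y where "a \<le> Y" "Y \<le> X" "F Y = Y"
proof -
  define S where "S = {Y. a \<le> Y \<and> F Y \<le> Y}"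
  define Y where "Y = Inf S"
  have "X \<in> S" using X by (simp add: S_def)
  then have "S \<noteq> {}" by auto
  have bdd: "bdd_below S" by (auto simp: S_def bdd_below_def)
  have aY: "a \<le> Y" unfolding Y_def using \<open>S \<noteq> {}\<close> by (rule cInf_greatest) (simp add: S_def)
  have YZ: "Y \<le> Z" if "Z \<in> S" for Z unfolding Y_def by (rule cInf_lower[OF that bdd])
  have FY: "F Y \<le> Y"
    unfolding Y_def using \<open>S \<noteq> {}\<close>
  proof (rule cInf_greatest)
    fix Z assume "Z \<in> S"
    then show "F (Inf S) \<le> Z"
      using mono[OF aY YZ[OF \<open>Z \<in> S\<close>]] by (auto simp: S_def Y_def)
  qed
  have "F Y \<in> S" using lower[OF aY] mono[OF lower[OF aY] FY] by (simp add: S_def)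
  then have "Y \<le> F Y" by (rule YZ)
  show thesis
    by (rule that[OF aY YZ[OF \<open>X \<in> S\<close>]]) (use FY \<open>Y \<le> F Y\<close> in auto)
qed

text \<open>Minimum principle: at a coordinate \<open>i\<close> where \<open>y\<close> is minimal and negative,
  \<open>(A *v y)$i \<ge> (\<Sum>j. A$i$j) * y$i \<ge> 0\<close>, so \<open>((mat 1 - c *\<^sub>R A) *v y)$i \<le> y$i < 0\<close>.\<close>
lemma id_minus_subgenerator_monotone:
  fixes A :: "real^'n^'n" and y :: "real^'n"
  assumes offdiag: "\<And>i j. i \<noteq> j \<Longrightarrow> 0 \<le> A$i$j" and rows: "\<And>i. (\<Sum>j\<in>UNIV. A$i$j) \<le> 0"
    and "0 \<le> c" and image: "0 \<le> (mat 1 - c *\<^sub>R A) *v y"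
  shows "0 \<le> y"
proof -
  obtain i where "is_arg_min (($) y) (\<lambda>i. i \<in> UNIV) i"
    using ex_is_arg_min_if_finite[of UNIV "($) y"] by auto
  then have min: "\<And>j. y$i \<le> y$j" by (simp add: is_arg_min_linorder)
  have "0 \<le> y$i"
  proof (rule ccontr)
    assume neg: "\<not> 0 \<le> y$i"
    have "A$i$j * y$i \<le> A$i$j * y$j" for j
      by (cases "j = i") (auto intro: mult_left_mono offdiag min)
    then have "(\<Sum>j\<in>UNIV. A$i$j) * y$i \<le> (A *v y)$i"
      unfolding matrix_vector_mult_def sum_distrib_right by (auto intro: sum_mono)
    moreover have "0 \<le> (\<Sum>j\<in>UNIV. A$i$j) * y$i"
      using rows[of i] neg by (simp add: mult_nonpos_nonpos)
    ultimately have "0 \<le> c * (A *v y)$i"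
      using \<open>0 \<le> c\<close> by simp
    moreover have "c * (A *v y)$i \<le> y$i"
      using image by (simp add: less_eq_vec_def matrix_vector_mult_diff_rdistrib
          flip: scaleR_matrix_vector_assoc)
    ultimately show False using neg by linarith
  qed
  then show ?thesis using min by (simp add: less_eq_vec_def order_trans)
qed

lemma id_minus_subgenerator_inverse:
  fixes A :: "real^'n^'n"
  assumes offdiag: "\<And>i j. i \<noteq> j \<Longrightarrow> 0 \<le> A$i$j" and rows: "\<And>i. (\<Sum>j\<in>UNIV. A$i$j) \<le> 0"
    and "0 \<le> c"
  shows "invertible (mat 1 - c *\<^sub>R A)" and "0 \<le> matrix_inv (mat 1 - c *\<^sub>R A)"
proof -
  let ?M = "mat 1 - c *\<^sub>R A"
  have monotone: "0 \<le> y" if "0 \<le> ?M *v y" for y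
    using offdiag rows \<open>0 \<le> c\<close> that by (rule id_minus_subgenerator_monotone)
  have kernel: "y = 0" if "?M *v y = 0" for y
  proof -
    have minus: "?M *v (- y) = - (?M *v y)"
      by (simp add: matrix_vector_mult_def sum_negf vec_eq_iff)
    have "0 \<le> - y" by (rule monotone) (simp add: minus that)
    moreover have "0 \<le> y" by (rule monotone) (simp add: that)
    ultimately show "y = 0" by (intro order.antisym) simp_all
  qed
  show inv: "invertible ?M"
    unfolding invertible_left_inverse matrix_left_invertible_ker using kernel by blast
  have "0 \<le> (\<chi> a. matrix_inv ?M $ a $ b)" for b
  proof (rule monotone)
    have "?M *v (\<chi> a. matrix_inv ?M $ a $ b) = (\<chi> a. (?M ** matrix_inv ?M) $ a $ b)"
      by (simp add: matrix_vector_mult_def matrix_matrix_mult_def)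
    also have "\<dots> = (\<chi> a. mat 1 $ a $ b)" by (simp only: invertible_matrix_inv(1)[OF inv])
    finally show "0 \<le> ?M *v (\<chi> a. matrix_inv ?M $ a $ b)"
      by (simp add: less_eq_vec_def mat_def)
  qed
  then show "0 \<le> matrix_inv ?M" by (simp add: less_eq_vec_def)
qed

section \<open>Block matrices and the first-passage matrix of the QBD\<close>

lemma sum_UNIV_Plus:
  "(\<Sum>x\<in>UNIV. f x) = (\<Sum>a\<in>UNIV. f (Inl a)) + (\<Sum>b\<in>UNIV. f (Inr b))"
  for f :: "'a::finite + 'b::finite \<Rightarrow> 'c::comm_monoid_add"
  by (simp flip: UNIV_Plus_UNIV add: sum.Plus)

lemma blocks_nth [simp]:
  "blocks A B C D $ Inl a $ Inl b = A$a$b"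
  "blocks A B C D $ Inl a $ Inr c = B$a$c"
  "blocks A B C D $ Inr d $ Inl b = C$d$b"
  "blocks A B C D $ Inr d $ Inr c = D$d$c"
  by (simp_all add: blocks_def)

lemma eq_blocks_iff:
  "X = blocks A B C D \<longleftrightarrow>
     (\<forall>a b. X$Inl a$Inl b = A$a$b) \<and> (\<forall>a b. X$Inl a$Inr b = B$a$b) \<and>
     (\<forall>a b. X$Inr a$Inl b = C$a$b) \<and> (\<forall>a b. X$Inr a$Inr b = D$a$b)"
  by (auto simp: vec_eq_iff blocks_def split: sum.split)

lemma blocks_mult:
  "blocks A B C D ** blocks A' B' C' D' =
   blocks (A ** A' + B ** C') (A ** B' + B ** D') (C ** A' + D ** C') (C ** B' + D ** D')"
  by (simp add: eq_blocks_iff matrix_matrix_mult_def sum_UNIV_Plus)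

lemma blocks_add: "blocks A B C D + blocks A' B' C' D' = blocks (A + A') (B + B') (C + C') (D + D')"
  by (simp add: eq_blocks_iff)

lemma zero_eq_blocks: "0 = blocks 0 0 0 0"
  by (simp add: eq_blocks_iff)

lemma mat_1_eq_blocks: "mat 1 = blocks (mat 1) 0 0 (mat 1)"
  by (simp add: eq_blocks_iff mat_def)

text \<open>Upper right block of the taboo matrix after \<open>n\<close> steps at level \<open>k\<close>: the only paths climb
  \<open>(n + k) div 2\<close> levels in \<open>S+\<close>, step down into \<open>S-\<close> once and then descend
  \<open>(n - k) div 2 - 1\<close> levels in \<open>S-\<close>.\<close>
definition taboo_down :: "real^'p^'p \<Rightarrow> real^'m^'p \<Rightarrow> real^'m^'m \<Rightarrow> nat \<Rightarrow> nat \<Rightarrow> real^'m^'p" where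
  "taboo_down W Q V n k =
     (if k < n \<and> even (n - k) then matpow W ((n + k) div 2) ** Q ** matpow V ((n - k) div 2 - 1) else 0)"

lemma taboo_down_eq: "taboo_down W Q V (k + 2 * l + 2) k = matpow W (k + l + 1) ** Q ** matpow V l"
proof -
  have "(k + 2 * l + 2 + k) div 2 = k + l + 1" "(k + 2 * l + 2 - k) div 2 - 1 = l" by simp_all
  then show ?thesis by (simp add: taboo_down_def)
qed

lemma taboo_down_eq_0:
  assumes "\<And>l. n \<noteq> k + 2 * l + 2"
  shows "taboo_down W Q V n k = 0"
proof -
  have "\<not> (k < n \<and> even (n - k))"
  proof
    assume k_n: "k < n \<and> even (n - k)"
    then obtain m where "n - k = 2 * m" by (meson evenE)
    with k_n have "n = k + 2 * (m - 1) + 2" by (cases m) auto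
    with assms show False by blast
  qed
  then show ?thesis unfolding taboo_down_def by (rule if_not_P)
qed

lemma taboo_down_Suc:
  "taboo_down W Q V (Suc n) k = (if Suc k = n then matpow W n ** Q else 0) + taboo_down W Q V n (Suc k) ** V"
proof -
  have "n = Suc k \<or> (\<exists>l'. n = Suc k + 2 * l' + 2)" if "Suc n = k + 2 * l + 2" for l
    using that by (cases l) auto
  then consider (first) "n = Suc k" | (later) l where "n = Suc k + 2 * l + 2"
    | (none) "\<And>l. Suc n \<noteq> k + 2 * l + 2" "\<And>l. n \<noteq> Suc k + 2 * l + 2"
    by blast
  then show ?thesis
  proof cases
    case first
    then show ?thesis using taboo_down_eq[of W Q V k 0] taboo_down_eq_0[of n "Suc k" W Q V] by simp
  next
    case later
    then have "Suc n = k + 2 * Suc l + 2" by simp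
    then show ?thesis
      using later taboo_down_eq[of W Q V k "Suc l"] taboo_down_eq[of W Q V "Suc k" l]
      by (simp add: matrix_mul_assoc)
  next
    case none
    have "n \<noteq> Suc k" using none(1)[of 0] by simp
    moreover have "taboo_down W Q V (Suc n) k = 0" using none(1) by (rule taboo_down_eq_0)
    moreover have "taboo_down W Q V n (Suc k) = 0" using none(2) by (rule taboo_down_eq_0)
    ultimately show ?thesis by simp
  qed
qed

lemma qbd_taboo_closed_form:
  "qbd_taboo (blocks 0 Q 0 V) 0 (blocks W 0 0 0) n k =
     blocks (if k = n then matpow W n else 0) (taboo_down W Q V n k) 0
       (if n = 0 \<and> k = 0 then mat 1 else 0)"
proof (induction n arbitrary: k)
  case 0
  then show ?case by (simp add: taboo_down_def mat_1_eq_blocks flip: zero_eq_blocks)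
next
  case (Suc n)
  then show ?case
    by (cases k) (simp_all add: blocks_mult blocks_add taboo_down_Suc flip: zero_eq_blocks)
qed

lemma qbd_G_blocks:
  assumes "(\<lambda>k. matpow W k ** Q ** matpow V k) sums X"
  shows "qbd_G (blocks 0 Q 0 V) 0 (blocks W 0 0 0) = blocks 0 X 0 V"
proof -
  define t where "t n = (if even n then matpow W (n div 2) ** Q ** matpow V (n div 2) else 0)" for n
  have step: "qbd_taboo (blocks 0 Q 0 V) 0 (blocks W 0 0 0) n 0 ** blocks 0 Q 0 V =
      blocks 0 (t n) 0 (if n = 0 then V else 0)" for n
  proof -
    have "(if n = 0 then matpow W n else 0) ** Q + taboo_down W Q V n 0 ** V = t n"
    proof (cases "\<exists>l. n = 2 * l + 2")
      case True
      then obtain l where "n = 2 * l + 2" by blast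
      then show ?thesis using taboo_down_eq[of W Q V 0 l]
        by (simp add: t_def matrix_mul_assoc)
    next
      case False
      then have "taboo_down W Q V n 0 = 0" by (intro taboo_down_eq_0) auto
      moreover have "odd n" if "n \<noteq> 0"
      proof
        assume "even n"
        then obtain m where "n = 2 * m" by (rule evenE)
        with that False show False by (cases m) auto
      qed
      ultimately show ?thesis by (auto simp: t_def)
    qed
    then show ?thesis
      by (simp add: qbd_taboo_closed_form blocks_mult flip: zero_eq_blocks)
  qed
  have "(\<lambda>n. t (2 * n)) sums X" using assms by (simp add: t_def)
  then have "t sums X"
    by (subst (asm) sums_mono_reindex) (auto simp: t_def strict_mono_def elim!: oddE)
  then have "(\<lambda>n. t n $ a $ b) sums X $ a $ b" for a b
    by (simp add: sums_def tendsto_vec_nth flip: sum_component)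
  moreover have "(\<lambda>n. (if n = 0 then V else 0) $ c $ d) sums V $ c $ d" for c d
  proof -
    have "(\<lambda>n. (if n = 0 then V else 0) $ c $ d) = (\<lambda>n. if n = 0 then V $ c $ d else 0)"
      by auto
    also have "\<dots> sums V $ c $ d" by (rule sums_single)
    finally show ?thesis .
  qed
  ultimately show ?thesis
    by (simp add: qbd_G_def step eq_blocks_iff sums_iff)
qed

section \<open>The minimal solution of the Riccati equation as a series\<close>

lemma generator_offdiag_nonneg: "is_generator T \<Longrightarrow> i \<noteq> j \<Longrightarrow> 0 \<le> T$i$j"
  by (simp add: is_generator_def)

lemma blk_pp_generator_offdiag_nonneg: "is_generator T \<Longrightarrow> i \<noteq> j \<Longrightarrow> 0 \<le> blk_pp T $ i $ j"
  by (simp add: blk_pp_def generator_offdiag_nonneg)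

lemma blk_pp_generator_row_sum:
  assumes "is_generator T"
  shows "(\<Sum>j\<in>UNIV. blk_pp T $ i $ j) \<le> 0"
proof -
  have "(\<Sum>j\<in>UNIV. blk_pp T $ i $ j) + (\<Sum>j\<in>UNIV. T $ Inl i $ Inr j) = 0"
    using assms by (simp add: is_generator_def blk_pp_def flip: sum_UNIV_Plus)
  moreover have "0 \<le> (\<Sum>j\<in>UNIV. T $ Inl i $ Inr j)"
    using assms by (simp add: sum_nonneg generator_offdiag_nonneg)
  ultimately show ?thesis by linarith
qed

lemma blk_pm_generator_nonneg: "is_generator T \<Longrightarrow> 0 \<le> blk_pm T"
  by (simp add: less_eq_vec_def blk_pm_def generator_offdiag_nonneg)

lemma blk_mp_generator_nonneg: "is_generator T \<Longrightarrow> 0 \<le> blk_mp T"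
  by (simp add: less_eq_vec_def blk_mp_def generator_offdiag_nonneg)

lemma uniformization_nonneg:
  assumes "is_generator T" "0 < mu" "\<And>i. \<bar>T$i$i\<bar> \<le> mu"
  shows "0 \<le> mat 1 + (1 / mu) *\<^sub>R T"
proof -
  have "0 \<le> 1 + T$i$i / mu" for i
    using assms(2) assms(3)[of i] by (simp add: field_simps abs_le_iff)
  then show ?thesis
    using assms(1,2) by (simp add: less_eq_vec_def mat_def generator_offdiag_nonneg)
qed

lemma blk_pm_uniformization: "blk_pm (mat 1 + c *\<^sub>R T) = c *\<^sub>R blk_pm T"
  by (simp add: vec_eq_iff blk_pm_def mat_def)

lemma blk_mm_uniformization: "blk_mm (mat 1 + c *\<^sub>R T) = mat 1 + c *\<^sub>R blk_mm T"
  by (simp add: vec_eq_iff blk_mm_def mat_def)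

lemma blk_mm_nonneg: "0 \<le> A \<Longrightarrow> 0 \<le> blk_mm A"
  by (simp add: less_eq_vec_def blk_mm_def)

lemma nonneg_mat_iff: "nonneg_mat X \<longleftrightarrow> 0 \<le> X"
  by (simp add: nonneg_mat_def less_eq_vec_def)

lemma is_Psi_iff:
  "is_Psi T Psi \<longleftrightarrow> 0 \<le> Psi \<and> riccati_sol T Psi \<and> (\<forall>X. 0 \<le> X \<and> riccati_sol T X \<longrightarrow> Psi \<le> X)"
  by (simp add: is_Psi_def nonneg_mat_iff less_eq_vec_def)

lemma riccati_sol_iff_fixpoint:
  fixes T :: "real^('p::finite+'m::finite)^('p+'m)"
  assumes "c \<noteq> 0"
    and MW: "(mat 1 - c *\<^sub>R blk_pp T) ** W = mat 1" and WM: "W ** (mat 1 - c *\<^sub>R blk_pp T) = mat 1"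
  shows "riccati_sol T Y \<longleftrightarrow>
    Y = W ** (c *\<^sub>R blk_pm T) + W ** Y ** (mat 1 + c *\<^sub>R (blk_mm T + blk_mp T ** Y))"
proof -
  let ?M = "mat 1 - c *\<^sub>R blk_pp T"
  let ?R = "c *\<^sub>R blk_pm T + Y ** (mat 1 + c *\<^sub>R (blk_mm T + blk_mp T ** Y))"
  have "?M ** Y - ?R = - c *\<^sub>R (blk_pm T + Y ** blk_mm T + blk_pp T ** Y + Y ** blk_mp T ** Y)"
    by (simp add: matrix_diff_rdistrib matrix_add_ldistrib matrix_scalar_ac
        flip: scalar_matrix_assoc) (simp add: algebra_simps matrix_mul_assoc)
  then have "riccati_sol T Y \<longleftrightarrow> ?M ** Y - ?R = 0"
    using \<open>c \<noteq> 0\<close> by (simp add: riccati_sol_def)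
  also have "\<dots> \<longleftrightarrow> ?M ** Y = ?R" by (rule right_minus_eq)
  also have "\<dots> \<longleftrightarrow> Y = W ** ?R"
    by (metis MW WM matrix_mul_assoc matrix_mul_lid)
  finally show ?thesis by (simp add: matrix_add_ldistrib matrix_mul_assoc)
qed

lemma series_sums_below_superfixpoint:
  fixes Q :: "real^'m^'p" and W :: "real^'p^'p" and V :: "real^'m^'m"
  assumes W: "0 \<le> W" and Q: "0 \<le> Q" and V: "0 \<le> V"
    and Psi: "0 \<le> Psi" "Q + W ** Psi ** V \<le> Psi"
  obtains X where "(\<lambda>k. matpow W k ** Q ** matpow V k) sums X"
    and "0 \<le> X" "X \<le> Psi" "X = Q + W ** X ** V"
proof -
  define t where "t = (\<lambda>k. matpow W k ** Q ** matpow V k)"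
  define S where "S = (\<lambda>n. \<Sum>k<n. t k)"
  have t_nonneg: "0 \<le> t k" for k
    unfolding t_def by (intro matrix_mult_nonneg matpow_nonneg W Q V)
  have S_Suc: "S (Suc n) = Q + W ** S n ** V" for n
    by (simp add: S_def t_def sum.lessThan_Suc_shift matrix_mult_sum_distrib matpow_commute
        matrix_mul_assoc del: sum.lessThan_Suc)
  have S_le: "S n \<le> Psi" for n
  proof (induction n)
    case 0
    then show ?case using Psi(1) by (simp add: S_def)
  next
    case (Suc n)
    have "0 \<le> S n" unfolding S_def by (intro sum_nonneg t_nonneg)
    then have "S (Suc n) \<le> Q + W ** Psi ** V"
      unfolding S_Suc using Suc.IH by (intro add_left_mono matrix_mult_mono matrix_mult_nonneg W V order_refl)
    then show ?case using Psi(2) by simp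
  qed
  have "summable t" and X_nonneg: "0 \<le> suminf t" and X_le: "suminf t \<le> Psi"
    using nonneg_matrix_series_summable[OF t_nonneg S_le[unfolded S_def]] by simp_all
  from \<open>summable t\<close> have "S \<longlonglongrightarrow> suminf t" unfolding S_def by (rule summable_LIMSEQ)
  then have "(\<lambda>n. S (Suc n)) \<longlonglongrightarrow> Q + W ** suminf t ** V"
    unfolding S_Suc by (intro tendsto_intros)
  moreover have "(\<lambda>n. S (Suc n)) \<longlonglongrightarrow> suminf t" using \<open>S \<longlonglongrightarrow> suminf t\<close> by (rule LIMSEQ_Suc)
  ultimately have "suminf t = Q + W ** suminf t ** V" by (rule LIMSEQ_unique[symmetric])
  moreover have "t sums suminf t" using \<open>summable t\<close> by (rule summable_sums)
  ultimately show thesis using that X_nonneg X_le by (simp add: t_def)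
qed

lemma minimal_solution_eq_series:
  fixes Q :: "real^'m^'p" and W :: "real^'p^'p" and V :: "real^'m^'p \<Rightarrow> real^'m^'m"
  assumes W: "0 \<le> W" and Q: "0 \<le> Q"
    and V_nonneg: "\<And>Y. 0 \<le> Y \<Longrightarrow> 0 \<le> V Y"
    and V_mono: "\<And>Y Z. 0 \<le> Y \<Longrightarrow> Y \<le> Z \<Longrightarrow> V Y \<le> V Z"
    and Psi: "0 \<le> Psi" "Psi = Q + W ** Psi ** V Psi"
    and minimal: "\<And>Y. 0 \<le> Y \<Longrightarrow> Y = Q + W ** Y ** V Y \<Longrightarrow> Psi \<le> Y"
  shows "(\<lambda>k. matpow W k ** Q ** matpow (V Psi) k) sums Psi"
proof -
  define F where "F Y = Q + W ** Y ** V Y" for Y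
  have F_nonneg: "0 \<le> F Y" if "0 \<le> Y" for Y
    unfolding F_def using that by (intro add_nonneg_nonneg Q matrix_mult_nonneg W V_nonneg)
  have F_mono: "F Y \<le> F Z" if "0 \<le> Y" "Y \<le> Z" for Y Z
    unfolding F_def using that
    by (intro add_left_mono matrix_mult_mono matrix_mult_nonneg W V_nonneg V_mono order_refl)
  obtain X where sums: "(\<lambda>k. matpow W k ** Q ** matpow (V Psi) k) sums X"
    and X: "0 \<le> X" "X \<le> Psi" and X_eq: "X = Q + W ** X ** V Psi"
    using series_sums_below_superfixpoint[OF W Q V_nonneg[OF Psi(1)] Psi(1)] Psi(2) by auto
  have "F X \<le> X"
    unfolding F_def by (subst (2) X_eq) (intro add_left_mono matrix_mult_mono matrix_mult_nonneg
        order_refl W X V_nonneg V_mono)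
  then obtain Y where "0 \<le> Y" "Y \<le> X" "F Y = Y"
    using fixpoint_below_superfixpoint[of 0 F X] F_mono F_nonneg X by blast
  then have "Psi \<le> Y" using minimal by (simp add: F_def)
  with \<open>Y \<le> X\<close> X have "X = Psi" by simp
  with sums show ?thesis by simp
qed

lemma Psi_eq_series:
  fixes T :: "real^('p::finite+'m::finite)^('p+'m)"
  assumes gen: "is_generator T" and Psi: "is_Psi T Psi"
    and mu_pos: "0 < mu" and mu_ge: "\<And>i. \<bar>T$i$i\<bar> \<le> mu"
  defines "P \<equiv> mat 1 + (1 / mu) *\<^sub>R T"
    and "W \<equiv> matrix_inv (mat 1 - (1 / mu) *\<^sub>R blk_pp T)"
    and "V \<equiv> \<lambda>Y. mat 1 + (1 / mu) *\<^sub>R (blk_mm T + blk_mp T ** Y)"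
  shows "(\<lambda>k. matpow W k ** (W ** blk_pm P) ** matpow (V Psi) k) sums Psi"
proof -
  have c: "0 < 1 / mu" using mu_pos by simp
  have inv: "invertible (mat 1 - (1 / mu) *\<^sub>R blk_pp T)" and W_nonneg: "0 \<le> W"
    using id_minus_subgenerator_inverse[of "blk_pp T" "1 / mu"] c
      blk_pp_generator_offdiag_nonneg[OF gen] blk_pp_generator_row_sum[OF gen]
    by (auto simp: W_def)
  have fixpoint: "riccati_sol T Y \<longleftrightarrow> Y = W ** blk_pm P + W ** Y ** V Y" for Y
    using riccati_sol_iff_fixpoint[of "1 / mu" T W Y] invertible_matrix_inv[OF inv] c
    by (simp add: W_def V_def P_def blk_pm_uniformization)
  have Q_nonneg: "0 \<le> W ** blk_pm P"
    unfolding P_def blk_pm_uniformization using W_nonneg blk_pm_generator_nonneg[OF gen] c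
    by (intro matrix_mult_nonneg scaleR_nonneg_nonneg) auto
  have V_eq: "V Y = blk_mm P + (1 / mu) *\<^sub>R (blk_mp T ** Y)" for Y
    by (simp add: V_def P_def blk_mm_uniformization scaleR_right_distrib add.assoc)
  have "0 \<le> blk_mm P"
    unfolding P_def by (intro blk_mm_nonneg uniformization_nonneg gen mu_pos mu_ge)
  then have V_nonneg: "0 \<le> V Y" if "0 \<le> Y" for Y
    unfolding V_eq using c that blk_mp_generator_nonneg[OF gen]
    by (intro add_nonneg_nonneg scaleR_nonneg_nonneg matrix_mult_nonneg) auto
  have V_mono: "V Y \<le> V Z" if "0 \<le> Y" "Y \<le> Z" for Y Z
    unfolding V_eq using c that blk_mp_generator_nonneg[OF gen]
    by (intro add_left_mono scaleR_left_mono matrix_mult_mono order_refl) auto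
  from Psi fixpoint show ?thesis
    unfolding is_Psi_iff
    by (intro minimal_solution_eq_series W_nonneg Q_nonneg V_nonneg V_mono) auto
qed

theorem lemma2:
  fixes T :: "real^('p::finite + 'm::finite)^('p + 'm)"
    and Psi :: "real^'m^'p"
    and mu :: real
  assumes gen: "is_generator T"
    and Psi: "is_Psi T Psi"
    and mu_pos: "mu > 0"
    and mu_ge: "\<forall>i. \<bar>T$i$i\<bar> \<le> mu"
  defines "U \<equiv> blk_mm T + blk_mp T ** Psi"
    and "P \<equiv> mat 1 + (1 / mu) *\<^sub>R T"
    and "V \<equiv> mat 1 + (1 / mu) *\<^sub>R (blk_mm T + blk_mp T ** Psi)"
    and "W \<equiv> matrix_inv (mat 1 - (1 / mu) *\<^sub>R blk_pp T)"
  shows "qbd_G (blocks 0 (W ** blk_pm P) 0 V) 0 (blocks W 0 0 0) = blocks 0 Psi 0 V"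
proof (rule qbd_G_blocks)
  show "(\<lambda>k. matpow W k ** (W ** blk_pm P) ** matpow V k) sums Psi"
    using Psi_eq_series[OF gen Psi mu_pos] mu_ge by (simp add: P_def V_def W_def)
qed

end
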